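(* Let $n\ge1$. (1) The number of linked partitions of $[n]$ is $n!$. (2) For each $k$, the number of linked partitions of $[n]$ with exactly $k$ singly covered minimal elements is the signless Stirling number of the first kind $c(n,k)$. (3) For each $k$, the number of linked partitions $\pi$ of $[n]$ with $\beta(\pi)=k$ is the Eulerian number $A(n,k)$, where $\beta(\pi)$ is the number of singly covered elements $i$ with $i\ne\min(B[i])$ plus the number of singleton blocks of $\pi$.
   Context: Two finite sets of integers $E,F$ are nearly disjoint if for every $i\in E\cap F$ either ($i=\min(E)$, $|E|>1$, $i\ne\min(F)$) or ($i=\min(F)$, $|F|>1$, $i\ne\min(E)$). A linked partition of $[n]$ is a set of nonempty subsets (blocks) of $[n]$ with union $[n]$, any two distinct blocks nearly disjoint. Every element lies in exactly one or two blocks (singly/doubly covered); for singly covered $i$, $B[i]$ denotes the block containing $i$. A singly covered minimal element is a singly covered $i$ with $i=\min(B[i])$. $c(n,k)$ is the number of permutations of $[n]$ with exactly $k$ cycles; $A(n,k)$ is the number of permutations of $[n]$ with exactly $k-1$ descents. *)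

theory Defs
  imports "HOL-Combinatorics.Combinatorics"
begin

definition nearly_disjoint :: "nat set \<Rightarrow> nat set \<Rightarrow> bool" where
  "nearly_disjoint E F \<longleftrightarrow>
     (\<forall>i \<in> E \<inter> F.
        (i = Min E \<and> card E > 1 \<and> i \<noteq> Min F) \<or>
        (i = Min F \<and> card F > 1 \<and> i \<noteq> Min E))"

definition linked_partitions :: "nat \<Rightarrow> nat set set set" where
  "linked_partitions n = {\<pi>. (\<forall>B \<in> \<pi>. B \<noteq> {} \<and> B \<subseteq> {1..n}) \<and> \<Union>\<pi> = {1..n} \<and>
       (\<forall>E \<in> \<pi>. \<forall>F \<in> \<pi>. E \<noteq> F \<longrightarrow> nearly_disjoint E F)}"

definition singly_covered :: "nat set set \<Rightarrow> nat \<Rightarrow> bool" where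
  "singly_covered \<pi> i \<longleftrightarrow> card {B \<in> \<pi>. i \<in> B} = 1"

(* B[i]: the block containing a singly covered element i *)
definition block_of :: "nat set set \<Rightarrow> nat \<Rightarrow> nat set" where
  "block_of \<pi> i = (THE B. B \<in> \<pi> \<and> i \<in> B)"

definition num_singly_min :: "nat \<Rightarrow> nat set set \<Rightarrow> nat" where
  "num_singly_min n \<pi> = card {i \<in> {1..n}. singly_covered \<pi> i \<and> i = Min (block_of \<pi> i)}"

definition beta :: "nat \<Rightarrow> nat set set \<Rightarrow> nat" where
  "beta n \<pi> = card {i \<in> {1..n}. singly_covered \<pi> i \<and> i \<noteq> Min (block_of \<pi> i)}
              + card {B \<in> \<pi>. card B = 1}"

definition num_cycles :: "nat \<Rightarrow> (nat \<Rightarrow> nat) \<Rightarrow> nat" where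
  "num_cycles n p = card ((\<lambda>x. {(p ^^ m) x | m. True}) ` {1..n})"

definition stirling_cycles :: "nat \<Rightarrow> nat \<Rightarrow> nat" where
  "stirling_cycles n k = card {p. p permutes {1..n} \<and> num_cycles n p = k}"

definition num_descents :: "nat \<Rightarrow> (nat \<Rightarrow> nat) \<Rightarrow> nat" where
  "num_descents n p = card {i \<in> {1..<n}. p i > p (Suc i)}"

(* A(n,k): permutations of [n] with exactly k-1 descents (so A(n,0) = 0) *)
definition eulerian :: "nat \<Rightarrow> nat \<Rightarrow> nat" where
  "eulerian n k = card {p. p permutes {1..n} \<and> num_descents n p + 1 = k}"

end

theory Submission
  imports Defs
begin

text \<open>
  In a linked partition every j is a non-minimal element of at most one block. Recording the
  minimum of that block (or 0 if there is none) identifies linked partitions of [n] with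
  subexceedant functions f, f j < j, of which there are n!. Singly covered minima become the
  zeros of f, and \<open>\<beta>\<close> becomes the number of elements of [n] that are not values of f.

  Both distributions are then matched with permutations by removing the largest element: from f
  one forgets f (n + 1); from a permutation one deletes n + 1 from its cycle, respectively from its
  one-line word. In each case the statistic grows by one for a controlled number of the n + 1
  ways to put the element back, so both sides satisfy the Stirling recurrence
  c(n+1,k) = n c(n,k) + c(n,k-1), respectively the Eulerian recurrence
  A(n+1,k) = k A(n,k) + (n+2-k) A(n,k-1).
\<close>

lemma card_level_set_bij_Sigma:
  fixes \<phi> :: "'x \<Rightarrow> 'a \<times> 'c" and s :: "'a \<Rightarrow> nat"
  assumes bij: "bij_betw \<phi> X (Sigma A C)" and fin: "finite A" "\<And>a. a \<in> A \<Longrightarrow> finite (C a)"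
    and t: "\<And>x. x \<in> X \<Longrightarrow> t x = s (fst (\<phi> x)) + of_bool (\<delta> (\<phi> x))"
    and u: "\<And>a. a \<in> A \<Longrightarrow> card {c \<in> C a. \<not> \<delta> (a, c)} = u (s a)"
    and v: "\<And>a. a \<in> A \<Longrightarrow> card {c \<in> C a. \<delta> (a, c)} = v (s a)"
  shows "card {x \<in> X. t x = k} =
           u k * card {a \<in> A. s a = k} + (if k = 0 then 0 else v (k - 1) * card {a \<in> A. s a = k - 1})"
proof -
  let ?t = "\<lambda>y. s (fst y) + of_bool (\<delta> y)"
  have "bij_betw \<phi> {x \<in> X. t x = k} {y \<in> Sigma A C. ?t y = k}"
    using bij by (rule bij_betw_Collect) (simp add: t)
  then have "card {x \<in> X. t x = k} = card {y \<in> Sigma A C. ?t y = k}"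
    by (rule bij_betw_same_card)
  also have "{y \<in> Sigma A C. ?t y = k} = Sigma A (\<lambda>a. {c \<in> C a. ?t (a, c) = k})"
    by fast
  also have "card \<dots> = (\<Sum>a\<in>A. card {c \<in> C a. ?t (a, c) = k})"
    using fin by simp
  also have "\<dots> = (\<Sum>a\<in>A. (if s a = k then u k else 0) + (if Suc (s a) = k then v (k - 1) else 0))"
  proof (rule sum.cong)
    fix a assume a: "a \<in> A"
    have "{c \<in> C a. ?t (a, c) = k} =
          (if s a = k then {c \<in> C a. \<not> \<delta> (a, c)} else if Suc (s a) = k then {c \<in> C a. \<delta> (a, c)} else {})"
      by (cases "s a = k") auto
    then show "card {c \<in> C a. ?t (a, c) = k} =
               (if s a = k then u k else 0) + (if Suc (s a) = k then v (k - 1) else 0)"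
      using u[OF a] v[OF a] by auto
  qed simp
  also have "\<dots> = u k * card {a \<in> A. s a = k} + (if k = 0 then 0 else v (k - 1) * card {a \<in> A. s a = k - 1})"
    using fin by (cases k) (simp_all add: sum.distrib sum.If_cases Int_def conj_commute)
  finally show ?thesis .
qed

section \<open>Subexceedant functions\<close>

definition subexceedant :: "nat \<Rightarrow> (nat \<Rightarrow> nat) set" where
  "subexceedant n = {f. (\<forall>j\<in>{1..n}. f j < j) \<and> (\<forall>j. j \<notin> {1..n} \<longrightarrow> f j = 0)}"

definition num_zeros :: "nat \<Rightarrow> (nat \<Rightarrow> nat) \<Rightarrow> nat" where
  "num_zeros n f = card {j \<in> {1..n}. f j = 0}"

definition non_values :: "nat \<Rightarrow> (nat \<Rightarrow> nat) \<Rightarrow> nat set" where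
  "non_values n f = {j \<in> {1..n}. j \<notin> f ` {1..n}}"

lemma subexceedant_0: "subexceedant 0 = {\<lambda>_. 0}"
  unfolding subexceedant_def by auto

lemma subexceedant_less: "f \<in> subexceedant n \<Longrightarrow> j \<in> {1..n} \<Longrightarrow> f j < j"
  unfolding subexceedant_def by auto

lemma subexceedant_outside: "f \<in> subexceedant n \<Longrightarrow> j \<notin> {1..n} \<Longrightarrow> f j = 0"
  unfolding subexceedant_def by auto

lemma bij_betw_subexceedant_Suc:
  "bij_betw (\<lambda>f. (f(Suc n := 0), f (Suc n))) (subexceedant (Suc n)) (subexceedant n \<times> {0..n})"
proof (rule bij_betw_byWitness[where f' = "\<lambda>(g, v). g(Suc n := v)"])
  have "f (Suc n) \<le> n" if "f \<in> subexceedant (Suc n)" for f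
    using subexceedant_less[OF that, of "Suc n"] by simp
  then show "(\<lambda>f. (f(Suc n := 0), f (Suc n))) ` subexceedant (Suc n) \<subseteq> subexceedant n \<times> {0..n}"
    by (auto simp: subexceedant_def)
qed (auto simp: subexceedant_def)

lemma finite_subexceedant: "finite (subexceedant n)"
  by (induction n) (auto simp: subexceedant_0 bij_betw_finite[OF bij_betw_subexceedant_Suc])

lemma card_subexceedant: "card (subexceedant n) = fact n"
  by (induction n)
     (auto simp: subexceedant_0 bij_betw_same_card[OF bij_betw_subexceedant_Suc] card_cartesian_product)

lemma num_zeros_Suc:
  "num_zeros (Suc n) f = num_zeros n (f(Suc n := 0)) + of_bool (f (Suc n) = 0)"
proof -
  have "{j \<in> {1..Suc n}. f j = 0} =
        {j \<in> {1..n}. (f(Suc n := 0)) j = 0} \<union> (if f (Suc n) = 0 then {Suc n} else {})"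
    by auto
  then show ?thesis unfolding num_zeros_def by auto
qed

lemma card_non_values_Suc:
  assumes "f \<in> subexceedant (Suc n)"
  shows "card (non_values (Suc n) f) =
           card (non_values n (f(Suc n := 0))) + of_bool (f (Suc n) \<notin> non_values n (f(Suc n := 0)))"
proof -
  let ?g = "f(Suc n := 0)"
  have "f ` {1..Suc n} = insert (f (Suc n)) (?g ` {1..n})"
    by (auto simp: image_iff atLeastAtMostSuc_conv)
  moreover have "Suc n \<notin> f ` {1..Suc n}"
  proof
    assume "Suc n \<in> f ` {1..Suc n}"
    then obtain j where "j \<in> {1..Suc n}" "f j = Suc n" by auto
    with subexceedant_less[OF assms this(1)] show False by simp
  qed
  ultimately have NV: "non_values (Suc n) f = insert (Suc n) (non_values n ?g - {f (Suc n)})"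
    unfolding non_values_def by auto
  have fin: "finite (non_values n ?g)" and "Suc n \<notin> non_values n ?g"
    unfolding non_values_def by auto
  then have "card (non_values (Suc n) f) = Suc (card (non_values n ?g - {f (Suc n)}))"
    unfolding NV by simp
  also have "\<dots> = card (non_values n ?g) + of_bool (f (Suc n) \<notin> non_values n ?g)"
    using card.remove[OF fin, of "f (Suc n)"] by auto
  finally show ?thesis .
qed

lemma card_subexceedant_num_zeros_Suc:
  "card {f \<in> subexceedant (Suc n). num_zeros (Suc n) f = k} =
     n * card {g \<in> subexceedant n. num_zeros n g = k} +
     (if k = 0 then 0 else card {g \<in> subexceedant n. num_zeros n g = k - 1})"
proof -
  have "{v \<in> {0..n}. v \<noteq> 0} = {1..n}" "{v \<in> {0..n}. v = 0} = {0}"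
    by auto
  then show ?thesis
    using card_level_set_bij_Sigma[OF bij_betw_subexceedant_Suc,
        where \<delta> = "\<lambda>(g, v). v = 0" and u = "\<lambda>_. n" and v = "\<lambda>_. 1"]
    by (auto simp: finite_subexceedant num_zeros_Suc)
qed

lemma card_subexceedant_non_values_Suc:
  "card {f \<in> subexceedant (Suc n). card (non_values (Suc n) f) = k} =
     k * card {g \<in> subexceedant n. card (non_values n g) = k} +
     (if k = 0 then 0 else (Suc n - (k - 1)) * card {g \<in> subexceedant n. card (non_values n g) = k - 1})"
proof -
  have "card {v \<in> {0..n}. v \<in> non_values n g} = card (non_values n g)"
    and "card {v \<in> {0..n}. v \<notin> non_values n g} = Suc n - card (non_values n g)" for g
  proof -
    have sub: "non_values n g \<subseteq> {0..n}"
      unfolding non_values_def by auto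
    then have "{v \<in> {0..n}. v \<in> non_values n g} = non_values n g"
      by auto
    then show "card {v \<in> {0..n}. v \<in> non_values n g} = card (non_values n g)"
      by simp
    have "{v \<in> {0..n}. v \<notin> non_values n g} = {0..n} - non_values n g"
      by auto
    then show "card {v \<in> {0..n}. v \<notin> non_values n g} = Suc n - card (non_values n g)"
      using sub by (simp add: card_Diff_subset finite_subset)
  qed
  then show ?thesis
    using card_level_set_bij_Sigma[OF bij_betw_subexceedant_Suc, where \<delta> = "\<lambda>(g, v). v \<notin> non_values n g"
        and s = "\<lambda>g. card (non_values n g)" and u = "\<lambda>m. m" and v = "\<lambda>m. Suc n - m"]
    by (simp add: finite_subexceedant card_non_values_Suc)
qed

section \<open>Cycles of permutations\<close>

lemma num_cycles_eq_card_orbits: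
  "p permutes {1..n} \<Longrightarrow> num_cycles n p = card (orbit p ` {1..n})"
  unfolding num_cycles_def
  by (simp add: orbit_altdef_permutation[OF permutes_imp_permutation[of "{1..n}"]])

lemma orbit_subset_closed:
  assumes "f x \<in> T" "\<And>y. y \<in> T \<Longrightarrow> f y \<in> T"
  shows "orbit f x \<subseteq> T"
proof
  fix y assume "y \<in> orbit f x"
  then show "y \<in> T" by induction (use assms in auto)
qed

lemma orbit_eq_if_in_orbit:
  "permutation p \<Longrightarrow> y \<in> orbit p x \<Longrightarrow> orbit p y = orbit p x"
  by (meson cyclic_on_orbit' orbit_cyclic_eq3)

lemma card_orbits_insert_fixpoint:
  assumes p: "p permutes S" and "finite S" "N \<notin> S"
  shows "card (orbit p ` insert N S) = Suc (card (orbit p ` S))"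
proof -
  have "orbit p N = {N}"
    using permutes_not_in[OF p \<open>N \<notin> S\<close>] by (simp add: orbit_eq_singleton_iff)
  moreover have "{N} \<notin> orbit p ` S"
    using permutes_orbit_subset[OF p] \<open>N \<notin> S\<close> by blast
  ultimately show ?thesis
    using \<open>finite S\<close> by simp
qed

lemma orbit_comp_transpose_disjoint:
  assumes p: "p permutes S" and "finite S" "N \<notin> S" "x \<in> S" "c \<notin> orbit p x"
  shows "orbit (p \<circ> transpose c N) x = orbit p x"
proof (rule orbit_cong)
  show "x \<in> orbit p x"
    using permutation_self_in_orbit[OF permutes_imp_permutation[OF \<open>finite S\<close> p]] .
  show "(p \<circ> transpose c N) y = p y" if "y \<in> orbit p x" for y
  proof -
    have "y \<noteq> c" "y \<noteq> N"
      using that assms(3,5) permutes_orbit_subset[OF p \<open>x \<in> S\<close>] by auto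
    then show ?thesis
      by simp
  qed
qed

lemma orbit_comp_transpose_self:
  assumes p: "p permutes S" and "N \<notin> S" "c \<in> S"
  shows "orbit (p \<circ> transpose c N) c = insert N (orbit p c)"
proof
  let ?q = "p \<circ> transpose c N"
  have pN: "p N = N"
    using permutes_not_in[OF p \<open>N \<notin> S\<close>] .
  have pN_iff: "p y = N \<longleftrightarrow> y = N" for y
    using pN permutes_inj[OF p] by (metis injD)
  have q_other: "?q y = p y" if "y \<noteq> c" "y \<noteq> N" for y
    using that by simp
  have qc: "?q c = N" and qN: "?q N = p c"
    using pN by simp_all
  show "orbit ?q c \<subseteq> insert N (orbit p c)"
  proof (rule orbit_subset_closed)
    fix y assume "y \<in> insert N (orbit p c)"
    then show "?q y \<in> insert N (orbit p c)"
      using qc qN q_other orbit.base[of p c] orbit.step[of _ p c]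
      by (cases "y = c"; cases "y = N") auto
  qed (simp add: pN)
  have N_in: "N \<in> orbit ?q c"
    using orbit.base[of ?q c] by (simp only: qc)
  have pc_in: "p c \<in> orbit ?q c"
    using orbit.step[OF N_in] by (simp only: qN)
  \<comment> \<open>Along the orbit of c, the new permutation follows p, except for the detour c \<mapsto> N \<mapsto> p c.\<close>
  have "orbit p c \<subseteq> orbit ?q c - {N}"
  proof (rule orbit_subset_closed)
    show "p c \<in> orbit ?q c - {N}"
      using pc_in pN_iff assms(2,3) by auto
    fix y assume "y \<in> orbit ?q c - {N}"
    then show "p y \<in> orbit ?q c - {N}"
      using pc_in orbit.step[of y ?q c] q_other pN_iff by (cases "y = c") auto
  qed
  then show "insert N (orbit p c) \<subseteq> orbit ?q c"
    using N_in by blast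
qed

lemma card_orbits_comp_transpose:
  assumes p: "p permutes S" and "finite S" "N \<notin> S" "c \<in> S"
  shows "card (orbit (p \<circ> transpose c N) ` insert N S) = card (orbit p ` S)"
proof -
  let ?q = "p \<circ> transpose c N" and ?C = "orbit p c"
  let ?A = "orbit p ` (S - ?C)"
  have perm_p: "permutation p"
    using permutes_imp_permutation[OF \<open>finite S\<close> p] .
  have "?q permutes insert N S"
    using p \<open>c \<in> S\<close> by (intro permutes_compose permutes_swap_id) (auto intro: permutes_subset)
  then have perm_q: "permutation ?q"
    using \<open>finite S\<close> by (meson finite_insert permutes_imp_permutation)
  have C_sub: "?C \<subseteq> S"
    using permutes_orbit_subset[OF p \<open>c \<in> S\<close>] .
  have "orbit ?q ` insert N S = insert (insert N ?C) ?A"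
  proof -
    have "insert N S = insert N ?C \<union> (S - ?C)"
      using C_sub \<open>c \<in> S\<close> by blast
    moreover have "orbit ?q ` insert N ?C = {insert N ?C}"
      using orbit_eq_if_in_orbit[OF perm_q _, of _ c] orbit_comp_transpose_self[OF p assms(3,4)] by auto
    moreover have "orbit ?q x = orbit p x" if "x \<in> S - ?C" for x
      using that orbit_comp_transpose_disjoint[OF p assms(2,3)] orbit_eq_if_in_orbit[OF perm_p]
        permutation_self_in_orbit[OF perm_p] by (metis DiffE)
    ultimately show ?thesis
      by (metis (no_types, lifting) image_Un image_cong insert_is_Un)
  qed
  moreover have "orbit p ` S = insert ?C ?A"
    using orbit_eq_if_in_orbit[OF perm_p] \<open>c \<in> S\<close> C_sub by blast
  moreover have "?C \<notin> ?A"
    using permutation_self_in_orbit[OF perm_p] by (auto simp: image_iff)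
  moreover have "insert N ?C \<notin> ?A"
    using permutes_orbit_subset[OF p] \<open>N \<notin> S\<close> by (auto simp: image_iff)
  ultimately show ?thesis
    using \<open>finite S\<close> by simp
qed

lemma permutes_comp_inv_restrict:
  assumes p: "p permutes insert N S" and \<sigma>: "\<sigma> permutes insert N S" "\<sigma> (inv p N) = N"
  shows "p \<circ> inv \<sigma> permutes S"
proof -
  have "inv \<sigma> N = inv p N"
    using permutes_inv_eq[OF \<sigma>(1)] \<sigma>(2) by blast
  then have "(p \<circ> inv \<sigma>) N = N"
    using permutes_inverses(1)[OF p] by simp
  moreover have "p \<circ> inv \<sigma> permutes insert N S"
    using permutes_inv[OF \<sigma>(1)] p by (rule permutes_compose)
  ultimately show ?thesis
    by (elim permutes_superset) blast
qed

text \<open>Used with \<open>\<sigma> c = transpose c N\<close>, which inserts N after c in its cycle, and with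
  \<open>\<sigma> c = insert_pos N c\<close>, which inserts N at position c of the one-line word.\<close>

lemma bij_betw_permutes_insert:
  assumes "N \<notin> S"
    and \<sigma>: "\<And>c. c \<in> insert N S \<Longrightarrow> \<sigma> c permutes insert N S" "\<And>c. c \<in> insert N S \<Longrightarrow> \<sigma> c c = N"
  shows "bij_betw (\<lambda>p. (p \<circ> inv (\<sigma> (inv p N)), inv p N))
           {p. p permutes insert N S} ({p. p permutes S} \<times> insert N S)"
proof (rule bij_betw_byWitness[where f' = "\<lambda>(p, c). p \<circ> \<sigma> c"])
  have composed: "p \<circ> \<sigma> c permutes insert N S" if "p permutes S" "c \<in> insert N S" for p c
  proof -
    have "p permutes insert N S"
      using that(1) by (rule permutes_subset) blast
    with \<sigma>(1)[OF that(2)] show ?thesis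
      by (rule permutes_compose)
  qed
  have inv_N: "inv p N \<in> insert N S" if "p permutes insert N S" for p
    using permutes_in_image[OF permutes_inv[OF that]] by simp
  have "(p \<circ> \<sigma> c \<circ> inv (\<sigma> (inv (p \<circ> \<sigma> c) N)), inv (p \<circ> \<sigma> c) N) = (p, c)"
    if p: "p permutes S" and c: "c \<in> insert N S" for p c
  proof -
    have "(p \<circ> \<sigma> c) c = N"
      using permutes_not_in[OF p \<open>N \<notin> S\<close>] \<sigma>(2)[OF c] by simp
    then have "inv (p \<circ> \<sigma> c) N = c"
      using permutes_inv_eq[OF composed[OF p c]] by blast
    moreover have "p \<circ> \<sigma> c \<circ> inv (\<sigma> c) = p"
      using permutes_inv_o(1)[OF \<sigma>(1)[OF c]] by (simp add: comp_assoc)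
    ultimately show ?thesis
      by simp
  qed
  then show "\<forall>pc \<in> {p. p permutes S} \<times> insert N S.
      (\<lambda>p. (p \<circ> inv (\<sigma> (inv p N)), inv p N)) ((\<lambda>(p, c). p \<circ> \<sigma> c) pc) = pc"
    by (auto simp only: mem_Sigma_iff mem_Collect_eq case_prod_conv)
  show "\<forall>p \<in> {p. p permutes insert N S}. (\<lambda>(p, c). p \<circ> \<sigma> c) (p \<circ> inv (\<sigma> (inv p N)), inv p N) = p"
    using permutes_inv_o(2)[OF \<sigma>(1)[OF inv_N]] by (simp add: comp_assoc)
  show "(\<lambda>(p, c). p \<circ> \<sigma> c) ` ({p. p permutes S} \<times> insert N S) \<subseteq> {p. p permutes insert N S}"
    using composed by auto
  show "(\<lambda>p. (p \<circ> inv (\<sigma> (inv p N)), inv p N)) ` {p. p permutes insert N S} \<subseteq>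
      {p. p permutes S} \<times> insert N S"
  proof (intro image_subsetI)
    fix p assume "p \<in> {p. p permutes insert N S}"
    then have p: "p permutes insert N S"
      by simp
    then show "(p \<circ> inv (\<sigma> (inv p N)), inv p N) \<in> {p. p permutes S} \<times> insert N S"
      using permutes_comp_inv_restrict[OF p \<sigma>[OF inv_N[OF p]]] inv_N[OF p] by simp
  qed
qed

lemma num_cycles_comp_transpose:
  assumes p: "p permutes {1..n}" and c: "c \<in> {1..Suc n}"
  shows "num_cycles (Suc n) (p \<circ> transpose c (Suc n)) = num_cycles n p + of_bool (c = Suc n)"
proof -
  have ins: "{1..Suc n} = insert (Suc n) {1..n}"
    by auto
  have p': "p permutes {1..Suc n}"
    using p by (rule permutes_subset) auto
  show ?thesis
  proof (cases "c = Suc n")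
    case True
    have "num_cycles (Suc n) p = card (orbit p ` insert (Suc n) {1..n})"
      using num_cycles_eq_card_orbits[OF p'] unfolding ins .
    then show ?thesis
      using True card_orbits_insert_fixpoint[OF p, of "Suc n"] num_cycles_eq_card_orbits[OF p] by simp
  next
    case False
    then have "c \<in> {1..n}"
      using c by auto
    moreover have q: "p \<circ> transpose c (Suc n) permutes {1..Suc n}"
      using p' c by (intro permutes_compose permutes_swap_id) auto
    moreover have "num_cycles (Suc n) (p \<circ> transpose c (Suc n)) =
               card (orbit (p \<circ> transpose c (Suc n)) ` insert (Suc n) {1..n})"
      using num_cycles_eq_card_orbits[OF q] by (simp only: ins)
    ultimately show ?thesis
      using False card_orbits_comp_transpose[OF p, of "Suc n" c] num_cycles_eq_card_orbits[OF p] by simp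
  qed
qed

lemma card_permutes_num_cycles_Suc:
  "card {p. p permutes {1..Suc n} \<and> num_cycles (Suc n) p = k} =
     n * card {p. p permutes {1..n} \<and> num_cycles n p = k} +
     (if k = 0 then 0 else card {p. p permutes {1..n} \<and> num_cycles n p = k - 1})"
proof -
  have ins: "insert (Suc n) {1..n} = {1..Suc n}"
    by auto
  have bij: "bij_betw (\<lambda>p. (p \<circ> transpose (inv p (Suc n)) (Suc n), inv p (Suc n)))
      {p. p permutes {1..Suc n}} ({p. p permutes {1..n}} \<times> {1..Suc n})"
    using bij_betw_permutes_insert[of "Suc n" "{1..n}" "\<lambda>c. transpose c (Suc n)"]
    unfolding ins by (simp add: permutes_swap_id)
  have "num_cycles (Suc n) p =
          num_cycles n (p \<circ> transpose (inv p (Suc n)) (Suc n)) + of_bool (inv p (Suc n) = Suc n)"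
    if "p permutes {1..Suc n}" for p
    using num_cycles_comp_transpose bij_betwE[OF bij] that by (fastforce simp: comp_assoc)
  moreover have "{c \<in> {1..Suc n}. c \<noteq> Suc n} = {1..n}" "{c \<in> {1..Suc n}. c = Suc n} = {Suc n}"
    by auto
  ultimately show ?thesis
    using card_level_set_bij_Sigma[OF bij,
        where \<delta> = "\<lambda>(p, c). c = Suc n" and s = "num_cycles n" and t = "num_cycles (Suc n)"
        and u = "\<lambda>_. n" and v = "\<lambda>_. 1" and k = k]
    by (simp add: finite_permutations)
qed

lemma card_subexceedant_num_zeros_eq_stirling_cycles:
  "card {f \<in> subexceedant n. num_zeros n f = k} = stirling_cycles n k"
  unfolding stirling_cycles_def
proof (induction n arbitrary: k)
  case 0
  show ?case
    by (cases "k = 0") (simp_all add: subexceedant_0 num_zeros_def num_cycles_def)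
next
  case (Suc n)
  show ?case
    by (simp only: card_subexceedant_num_zeros_Suc card_permutes_num_cycles_Suc Suc.IH)
qed

section \<open>Descents of permutations\<close>

text \<open>For p permuting {1..N-1}, \<open>p \<circ> insert_pos N j\<close> is the one-line word of p with the letter N
  inserted at position j.\<close>

definition insert_pos :: "nat \<Rightarrow> nat \<Rightarrow> nat \<Rightarrow> nat" where
  "insert_pos N j i = (if i < j then i else if i = j then N else if i \<le> N then i - 1 else i)"

lemma insert_pos_self [simp]: "insert_pos N j j = N"
  unfolding insert_pos_def by simp

lemma insert_pos_permutes: "1 \<le> j \<Longrightarrow> j \<le> N \<Longrightarrow> insert_pos N j permutes {1..N}"
  by (rule bij_imp_permutes,
      rule bij_betw_byWitness[where f' = "\<lambda>i. if i < j then i else if i < N then i + 1 else if i = N then j else i"])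
     (auto simp: insert_pos_def)

definition descent_set :: "nat \<Rightarrow> (nat \<Rightarrow> nat) \<Rightarrow> nat set" where
  "descent_set n p = {i \<in> {1..<n}. p i > p (Suc i)}"

lemma descent_set_insert_pos:
  assumes p: "p permutes {1..n}" and j: "1 \<le> j" "j \<le> Suc n"
  shows "descent_set (Suc n) (p \<circ> insert_pos (Suc n) j) =
     {i \<in> descent_set n p. Suc i < j} \<union> {i. i = j \<and> j \<le> n} \<union> Suc ` {i \<in> descent_set n p. j \<le> i}"
proof (intro set_eqI)
  fix i
  have p_range: "x \<in> {1..n} \<Longrightarrow> p x \<le> n" for x
    using permutes_in_image[OF p, of x] by auto
  have "p (Suc n) = Suc n"
    using permutes_not_in[OF p] by simp
  consider "Suc i < j" | "Suc i = j" | "i = j" | "j < i"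
    by linarith
  then show "i \<in> descent_set (Suc n) (p \<circ> insert_pos (Suc n) j) \<longleftrightarrow>
     i \<in> {i \<in> descent_set n p. Suc i < j} \<union> {i. i = j \<and> j \<le> n} \<union> Suc ` {i \<in> descent_set n p. j \<le> i}"
  proof cases
    case 4
    then obtain i' where "i = Suc i'" "j \<le> i'"
      by (metis Suc_le_eq less_imp_Suc_add le_add1)
    then show ?thesis
      using j by (auto simp: descent_set_def insert_pos_def image_iff)
  qed (use j p_range[of i] p_range[of j] \<open>p (Suc n) = Suc n\<close> in
        \<open>auto simp: descent_set_def insert_pos_def image_iff\<close>)
qed

lemma card_descent_set_insert_pos:
  assumes p: "p permutes {1..n}" and j: "1 \<le> j" "j \<le> Suc n"
  shows "card (descent_set (Suc n) (p \<circ> insert_pos (Suc n) j)) =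
           card (descent_set n p) + of_bool (j \<le> n \<and> j - 1 \<notin> descent_set n p)"
proof -
  let ?D = "descent_set n p"
  define L M R where "L = {i \<in> ?D. Suc i < j}" and "M = {i \<in> ?D. Suc i = j}" and "R = {i \<in> ?D. j \<le> i}"
  have fin: "finite L" "finite M" "finite R"
    unfolding L_def M_def R_def descent_set_def by auto
  have "descent_set (Suc n) (p \<circ> insert_pos (Suc n) j) = L \<union> {i. i = j \<and> j \<le> n} \<union> Suc ` R"
    unfolding descent_set_insert_pos[OF p j] L_def R_def ..
  moreover have "{i. i = j \<and> j \<le> n} = (if j \<le> n then {j} else {})"
    by auto
  moreover have "(L \<union> {i. i = j \<and> j \<le> n}) \<inter> Suc ` R = {}" "L \<inter> {i. i = j \<and> j \<le> n} = {}"
    unfolding L_def R_def by auto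
  ultimately have inserted: "card (descent_set (Suc n) (p \<circ> insert_pos (Suc n) j)) = card L + of_bool (j \<le> n) + card R"
    using fin by (simp add: card_Un_disjoint card_image)
  have "?D = L \<union> M \<union> R" "(L \<union> M) \<inter> R = {}" "L \<inter> M = {}"
    unfolding L_def M_def R_def by auto
  then have "card ?D = card L + card M + card R"
    using fin by (simp add: card_Un_disjoint)
  moreover have "M = (if j - 1 \<in> ?D then {j - 1} else {})"
    unfolding M_def using j by auto
  moreover have "j - 1 \<in> ?D \<Longrightarrow> j \<le> n"
    using j unfolding descent_set_def by auto
  ultimately show ?thesis
    using inserted by auto
qed

lemma num_descents_eq_card_descent_set: "num_descents n p = card (descent_set n p)"
  unfolding num_descents_def descent_set_def ..

text \<open>Inserting the maximum at position j creates a new descent iff j \<le> n and j - 1 is no descent;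
  position 0 counts as an ascent.\<close>

lemma card_positions_new_descent:
  "card {j \<in> {1..Suc n}. \<not> (j \<le> n \<and> j - 1 \<notin> descent_set n p)} = num_descents n p + 1"
  "card {j \<in> {1..Suc n}. j \<le> n \<and> j - 1 \<notin> descent_set n p} = Suc n - (num_descents n p + 1)"
proof -
  let ?old = "{j \<in> {1..Suc n}. \<not> (j \<le> n \<and> j - 1 \<notin> descent_set n p)}"
  have D: "descent_set n p \<subseteq> {1..<n}" "finite (descent_set n p)"
    unfolding descent_set_def by auto
  then have "?old = insert (Suc n) (Suc ` descent_set n p)"
    by (auto simp: image_iff Suc_le_eq) (metis Suc_pred not_gr0)
  moreover have "Suc n \<notin> Suc ` descent_set n p"
    using D by auto
  ultimately show card_old: "card ?old = num_descents n p + 1"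
    using D by (simp add: card_image num_descents_eq_card_descent_set)
  have "{j \<in> {1..Suc n}. j \<le> n \<and> j - 1 \<notin> descent_set n p} = {1..Suc n} - ?old"
    by blast
  moreover have "card ({1..Suc n} - ?old) = Suc n - card ?old"
    by (rule trans[OF card_Diff_subset]) auto
  ultimately show "card {j \<in> {1..Suc n}. j \<le> n \<and> j - 1 \<notin> descent_set n p} = Suc n - (num_descents n p + 1)"
    by (simp only: card_old)
qed

lemma card_permutes_num_descents_Suc:
  "card {p. p permutes {1..Suc n} \<and> num_descents (Suc n) p + 1 = k} =
     k * card {p. p permutes {1..n} \<and> num_descents n p + 1 = k} +
     (if k = 0 then 0
      else (Suc n - (k - 1)) * card {p. p permutes {1..n} \<and> num_descents n p + 1 = k - 1})"
proof -
  let ?\<sigma> = "insert_pos (Suc n)" and ?new_descent = "\<lambda>(p, j). j \<le> n \<and> j - 1 \<notin> descent_set n p"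
  have ins: "insert (Suc n) {1..n} = {1..Suc n}"
    by auto
  have "?\<sigma> j permutes {1..Suc n}" if "j \<in> {1..Suc n}" for j
    using that by (intro insert_pos_permutes) auto
  then have bij: "bij_betw (\<lambda>p. (p \<circ> inv (?\<sigma> (inv p (Suc n))), inv p (Suc n)))
      {p. p permutes {1..Suc n}} ({p. p permutes {1..n}} \<times> {1..Suc n})"
    using bij_betw_permutes_insert[of "Suc n" "{1..n}" ?\<sigma>] unfolding ins by simp
  have "num_descents (Suc n) p + 1 =
          num_descents n (p \<circ> inv (?\<sigma> (inv p (Suc n)))) + 1 +
          of_bool (?new_descent (p \<circ> inv (?\<sigma> (inv p (Suc n))), inv p (Suc n)))"
    if "p permutes {1..Suc n}" for p
  proof -
    let ?q = "p \<circ> inv (?\<sigma> (inv p (Suc n)))" and ?j = "inv p (Suc n)"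
    have q: "?q permutes {1..n}" and j: "1 \<le> ?j" "?j \<le> Suc n"
      using bij_betwE[OF bij] that by auto
    have "p = ?q \<circ> ?\<sigma> ?j"
      using permutes_inv_o(2)[OF insert_pos_permutes[OF j]] by (simp add: comp_assoc)
    then show ?thesis
      using card_descent_set_insert_pos[OF q j] by (simp add: num_descents_eq_card_descent_set)
  qed
  then show ?thesis
    using card_positions_new_descent card_level_set_bij_Sigma[OF bij, where \<delta> = ?new_descent and s = "\<lambda>p. num_descents n p + 1"
        and t = "\<lambda>p. num_descents (Suc n) p + 1" and u = "\<lambda>m. m" and v = "\<lambda>m. Suc n - m" and k = k]
    by (simp add: finite_permutations)
qed

text \<open>Stated from n = 1 on: for n = 0 there are no non-values, but the identity has
  \<open>num_descents 0 id + 1 = 1\<close>.\<close>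

lemma card_subexceedant_non_values_eq_eulerian:
  "card {f \<in> subexceedant (Suc n). card (non_values (Suc n) f) = k} = eulerian (Suc n) k"
  unfolding eulerian_def
proof (induction n arbitrary: k)
  case 0
  have "non_values 0 f = {}" "num_descents 0 f = 0" for f
    by (simp_all add: non_values_def num_descents_def)
  then show ?case
    unfolding card_subexceedant_non_values_Suc card_permutes_num_descents_Suc
    by (cases "k = 1"; cases "k = 2") (simp_all add: subexceedant_0)
next
  case (Suc n)
  show ?case
    by (simp only: card_subexceedant_non_values_Suc[of "Suc n"] card_permutes_num_descents_Suc[of "Suc n"] Suc.IH)
qed

section \<open>Linked partitions as subexceedant functions\<close>

definition block :: "nat \<Rightarrow> (nat \<Rightarrow> nat) \<Rightarrow> nat \<Rightarrow> nat set" where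
  "block n f i = insert i {j \<in> {1..n}. f j = i}"

text \<open>A minimum i with f i \<noteq> 0 is doubly covered: it heads its own block and is a non-minimal
  element of block f i.\<close>

definition block_heads :: "nat \<Rightarrow> (nat \<Rightarrow> nat) \<Rightarrow> nat set" where
  "block_heads n f = {i \<in> {1..n}. f i = 0 \<or> i \<in> f ` {1..n}}"

definition linked_partition_of :: "nat \<Rightarrow> (nat \<Rightarrow> nat) \<Rightarrow> nat set set" where
  "linked_partition_of n f = block n f ` block_heads n f"

text \<open>By near-disjointness the choice below is unique (see \<open>linked_partition_block_eqI\<close>).\<close>

definition parent :: "nat set set \<Rightarrow> nat \<Rightarrow> nat" where
  "parent \<pi> j = (if \<exists>B\<in>\<pi>. j \<in> B \<and> Min B < j then Min (SOME B. B \<in> \<pi> \<and> j \<in> B \<and> Min B < j) else 0)"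

lemma mem_block: "x \<in> block n f i \<longleftrightarrow> x = i \<or> (x \<in> {1..n} \<and> f x = i)"
  unfolding block_def by auto

lemma finite_block: "finite (block n f i)"
  unfolding block_def by auto

lemma Min_block: "f \<in> subexceedant n \<Longrightarrow> Min (block n f i) = i"
  by (rule Min_eqI[OF finite_block]) (auto simp: mem_block dest: subexceedant_less)

lemma inj_on_block: "f \<in> subexceedant n \<Longrightarrow> inj_on (block n f) A"
  by (metis Min_block inj_onI)

lemma card_block_eq_1_iff:
  assumes "f \<in> subexceedant n"
  shows "card (block n f i) = 1 \<longleftrightarrow> i \<notin> f ` {1..n}"
proof -
  have "i \<notin> {j \<in> {1..n}. f j = i}"
    using subexceedant_less[OF assms, of i] by auto
  then have "card (block n f i) = Suc (card {j \<in> {1..n}. f j = i})"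
    unfolding block_def by simp
  moreover have "{j \<in> {1..n}. f j = i} = {} \<longleftrightarrow> i \<notin> f ` {1..n}"
    by auto
  ultimately show ?thesis
    by simp
qed

lemma parent_in_block_heads:
  "f \<in> subexceedant n \<Longrightarrow> j \<in> {1..n} \<Longrightarrow> f j \<noteq> 0 \<Longrightarrow> f j \<in> block_heads n f"
  using subexceedant_less[of f n j] unfolding block_heads_def by auto

lemma blocks_containing:
  assumes f: "f \<in> subexceedant n" and j: "j \<in> {1..n}"
  shows "{B \<in> linked_partition_of n f. j \<in> B} =
           (if j \<in> block_heads n f then {block n f j} else {}) \<union> (if f j \<noteq> 0 then {block n f (f j)} else {})"
proof -
  have "0 \<notin> block_heads n f"
    unfolding block_heads_def by auto
  then show ?thesis
    using parent_in_block_heads[OF f j] j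
    unfolding linked_partition_of_def by (auto simp: mem_block)
qed

lemma linked_partition_of_in_linked_partitions:
  assumes f: "f \<in> subexceedant n"
  shows "linked_partition_of n f \<in> linked_partitions n"
  unfolding linked_partitions_def
proof (intro CollectI conjI ballI impI)
  fix B assume "B \<in> linked_partition_of n f"
  then show "B \<noteq> {}" "B \<subseteq> {1..n}"
    unfolding linked_partition_of_def block_heads_def by (auto simp: mem_block)
next
  have "j \<in> \<Union> (linked_partition_of n f)" if "j \<in> {1..n}" for j
    using blocks_containing[OF f that] that unfolding block_heads_def by (auto split: if_splits)
  then show "\<Union> (linked_partition_of n f) = {1..n}"
    unfolding linked_partition_of_def block_heads_def by (auto simp: mem_block)
next
  fix E F assume "E \<in> linked_partition_of n f" "F \<in> linked_partition_of n f" "E \<noteq> F"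
  then obtain i i' where i: "i \<in> block_heads n f" "E = block n f i"
    and i': "i' \<in> block_heads n f" "F = block n f i'" and "i \<noteq> i'"
    unfolding linked_partition_of_def by auto
  have nonsingleton: "card (block n f i) > 1" if "i \<in> block_heads n f" "f i \<noteq> 0" for i
  proof -
    have "card (block n f i) \<noteq> 1"
      using that card_block_eq_1_iff[OF f, of i] unfolding block_heads_def by auto
    moreover have "card (block n f i) \<noteq> 0"
      using finite_block[of n f i] by (simp add: block_def)
    ultimately show ?thesis
      by linarith
  qed
  have pos: "0 < k" if "k \<in> block_heads n f" for k
    using that unfolding block_heads_def by auto
  show "nearly_disjoint E F"
    unfolding nearly_disjoint_def
  proof
    fix x assume "x \<in> E \<inter> F"
    then consider "x = i" "f i = i'" | "x = i'" "f i' = i"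
      using \<open>i \<noteq> i'\<close> unfolding i i' by (auto simp: mem_block)
    then show "(x = Min E \<and> card E > 1 \<and> x \<noteq> Min F) \<or> (x = Min F \<and> card F > 1 \<and> x \<noteq> Min E)"
      unfolding i i' Min_block[OF f]
      by cases (use \<open>i \<noteq> i'\<close> i(1) i'(1) nonsingleton pos in auto)
  qed
qed

lemma linked_partition_block:
  assumes "\<pi> \<in> linked_partitions n" "B \<in> \<pi>"
  shows "finite B" "B \<subseteq> {1..n}" "Min B \<in> B" "\<And>x. x \<in> B \<Longrightarrow> Min B \<le> x" "Min B \<ge> 1"
proof -
  have ne: "B \<noteq> {}" and sub: "B \<subseteq> {1..n}"
    using assms unfolding linked_partitions_def by auto
  show fin: "finite B"
    using sub by (rule finite_subset) simp
  show "Min B \<in> B"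
    using fin ne by (rule Min_in)
  then show "Min B \<ge> 1"
    using sub by auto
  show "Min B \<le> x" if "x \<in> B" for x
    using fin that by (rule Min_le)
  show "B \<subseteq> {1..n}"
    by (fact sub)
qed

lemma nearly_disjoint_card_gt_1:
  assumes "nearly_disjoint E F" "Min E \<in> F" "Min E \<in> E" "Min F \<noteq> Min E"
  shows "card E > 1"
  using assms unfolding nearly_disjoint_def by auto

lemma linked_partition_block_eqI:
  assumes "\<pi> \<in> linked_partitions n" "B \<in> \<pi>" "B' \<in> \<pi>" "j \<in> B" "j \<in> B'"
    and "Min B = j \<longleftrightarrow> Min B' = j"
  shows "B = B'"
proof (rule ccontr)
  assume "B \<noteq> B'"
  then have "nearly_disjoint B B'"
    using assms(1-3) unfolding linked_partitions_def by auto
  then have "(j = Min B \<and> j \<noteq> Min B') \<or> (j = Min B' \<and> j \<noteq> Min B)"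
    using assms(4,5) unfolding nearly_disjoint_def by blast
  then show False
    using assms(6) by auto
qed

lemma parent_eq_Min:
  assumes \<pi>: "\<pi> \<in> linked_partitions n" and B: "B \<in> \<pi>" "j \<in> B" "Min B < j"
  shows "parent \<pi> j = Min B"
proof -
  let ?P = "\<lambda>B. B \<in> \<pi> \<and> j \<in> B \<and> Min B < j"
  have "?P (SOME B. ?P B)"
    using B by (intro someI[of ?P B]) simp
  then have "(SOME B. ?P B) = B"
    using linked_partition_block_eqI[OF \<pi> _ B(1) _ B(2)] B(3) by auto
  then show ?thesis
    unfolding parent_def using B by auto
qed

lemma parent_cases:
  assumes \<pi>: "\<pi> \<in> linked_partitions n"
  obtains "parent \<pi> j = 0" "\<And>B. B \<in> \<pi> \<Longrightarrow> j \<in> B \<Longrightarrow> Min B = j"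
  | B where "B \<in> \<pi>" "j \<in> B" "Min B < j" "parent \<pi> j = Min B"
proof (cases "\<exists>B\<in>\<pi>. j \<in> B \<and> Min B < j")
  case True
  then show ?thesis
    using parent_eq_Min[OF \<pi>] that(2) by blast
next
  case False
  then have "Min B = j" if "B \<in> \<pi>" "j \<in> B" for B
    using linked_partition_block(4)[OF \<pi> that] that by (meson order_le_less)
  moreover have "parent \<pi> j = 0"
    unfolding parent_def using False by auto
  ultimately show ?thesis
    using that(1) by blast
qed

lemma parent_in_subexceedant:
  assumes \<pi>: "\<pi> \<in> linked_partitions n"
  shows "parent \<pi> \<in> subexceedant n"
  unfolding subexceedant_def
proof (intro CollectI conjI ballI allI impI)
  show "parent \<pi> j < j" if "j \<in> {1..n}" for j
    using that by (cases rule: parent_cases[OF \<pi>, of j]) auto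
  show "parent \<pi> j = 0" if "j \<notin> {1..n}" for j
    using that linked_partition_block(2)[OF \<pi>] by (cases rule: parent_cases[OF \<pi>, of j]) blast+
qed

lemma block_parent_Min:
  assumes \<pi>: "\<pi> \<in> linked_partitions n" and B: "B \<in> \<pi>"
  shows "block n (parent \<pi>) (Min B) = B"
proof
  note B_facts = linked_partition_block[OF \<pi> B]
  show "B \<subseteq> block n (parent \<pi>) (Min B)"
  proof
    fix x assume "x \<in> B"
    then have "x = Min B \<or> Min B < x"
      using B_facts(4)[OF \<open>x \<in> B\<close>] by auto
    then show "x \<in> block n (parent \<pi>) (Min B)"
      using parent_eq_Min[OF \<pi> B \<open>x \<in> B\<close>] B_facts(2) \<open>x \<in> B\<close> by (auto simp: mem_block)
  qed
  show "block n (parent \<pi>) (Min B) \<subseteq> B"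
  proof
    fix x assume "x \<in> block n (parent \<pi>) (Min B)"
    then consider "x = Min B" | "x \<in> {1..n}" "parent \<pi> x = Min B"
      by (auto simp: mem_block)
    then show "x \<in> B"
    proof cases
      case 2
      then obtain B' where "B' \<in> \<pi>" "x \<in> B'" "Min B' = Min B"
        using B_facts(5) by (cases rule: parent_cases[OF \<pi>, of x]) auto
      then have "B' = B"
        using linked_partition_block_eqI[OF \<pi> _ B, of B' "Min B"] linked_partition_block(3)[OF \<pi>] B_facts(3)
        by metis
      then show ?thesis
        using \<open>x \<in> B'\<close> by simp
    qed (use B_facts in simp)
  qed
qed

lemma linked_partition_block_nonsingleton:
  assumes \<pi>: "\<pi> \<in> linked_partitions n" and B: "B \<in> \<pi>" "B' \<in> \<pi>" and "Min B \<in> B'" "Min B' < Min B"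
  obtains x where "x \<in> B" "Min B < x"
proof -
  note B_facts = linked_partition_block[OF \<pi> B(1)]
  have "B \<noteq> B'"
    using \<open>Min B' < Min B\<close> by auto
  then have "nearly_disjoint B B'"
    using \<pi> B unfolding linked_partitions_def by blast
  moreover have "Min B' \<noteq> Min B"
    using \<open>Min B' < Min B\<close> by simp
  ultimately have "\<not> card B \<le> 1"
    using nearly_disjoint_card_gt_1 \<open>Min B \<in> B'\<close> B_facts(3) by (meson not_le)
  then obtain a1 a2 where "a1 \<in> B" "a2 \<in> B" "a1 \<noteq> a2"
    using card_le_Suc0_iff_eq[OF B_facts(1)] by auto
  then obtain x where x: "x \<in> B" "x \<noteq> Min B"
    by blast
  then have "Min B < x"
    using B_facts(4)[OF x(1)] by simp
  with x(1) show ?thesis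
    by (rule that)
qed

lemma Min_in_block_heads:
  assumes \<pi>: "\<pi> \<in> linked_partitions n" and B: "B \<in> \<pi>"
  shows "Min B \<in> block_heads n (parent \<pi>)"
proof -
  note B_facts = linked_partition_block[OF \<pi> B]
  have "Min B \<in> parent \<pi> ` {1..n}" if nonzero: "parent \<pi> (Min B) \<noteq> 0"
  proof -
    obtain B' where B': "B' \<in> \<pi>" "Min B \<in> B'" "Min B' < Min B"
    proof (cases rule: parent_cases[OF \<pi>, of "Min B"])
      case 1
      then show ?thesis
        using nonzero by simp
    next
      case (2 B')
      then show ?thesis
        using that by blast
    qed
    then obtain x where x: "x \<in> B" "Min B < x"
      using linked_partition_block_nonsingleton[OF \<pi> B] by blast
    then have "parent \<pi> x = Min B"
      by (rule parent_eq_Min[OF \<pi> B])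
    moreover have "x \<in> {1..n}"
      using B_facts(2) x(1) by blast
    ultimately show ?thesis
      by (metis image_eqI)
  qed
  moreover have "Min B \<in> {1..n}"
    using B_facts(2,3) by blast
  ultimately show ?thesis
    unfolding block_heads_def by blast
qed

lemma linked_partition_of_parent:
  assumes \<pi>: "\<pi> \<in> linked_partitions n"
  shows "linked_partition_of n (parent \<pi>) = \<pi>"
proof
  show "\<pi> \<subseteq> linked_partition_of n (parent \<pi>)"
    unfolding linked_partition_of_def
    using block_parent_Min[OF \<pi>] Min_in_block_heads[OF \<pi>] by (metis image_eqI subsetI)
  show "linked_partition_of n (parent \<pi>) \<subseteq> \<pi>"
  proof
    fix B assume "B \<in> linked_partition_of n (parent \<pi>)"
    then obtain i where i: "i \<in> block_heads n (parent \<pi>)" "B = block n (parent \<pi>) i"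
      unfolding linked_partition_of_def by auto
    have "\<exists>B' \<in> \<pi>. Min B' = i"
    proof (cases "parent \<pi> i = 0")
      case True
      have "i \<in> \<Union> \<pi>"
        using \<pi> i(1) unfolding linked_partitions_def block_heads_def by auto
      then obtain X where "X \<in> \<pi>" "i \<in> X"
        by blast
      then show ?thesis
        using True linked_partition_block(5)[OF \<pi>] by (cases rule: parent_cases[OF \<pi>, of i]) force+
    next
      case False
      then obtain j where "j \<in> {1..n}" "parent \<pi> j = i"
        using i(1) unfolding block_heads_def by auto
      moreover have "i \<noteq> 0"
        using i(1) unfolding block_heads_def by auto
      ultimately show ?thesis
        by (cases rule: parent_cases[OF \<pi>, of j]) auto
    qed
    then show "B \<in> \<pi>"
      using block_parent_Min[OF \<pi>] i(2) by auto
  qed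
qed

lemma parent_linked_partition_of:
  assumes f: "f \<in> subexceedant n"
  shows "parent (linked_partition_of n f) = f"
proof
  fix j
  have \<pi>: "linked_partition_of n f \<in> linked_partitions n"
    by (rule linked_partition_of_in_linked_partitions[OF f])
  show "parent (linked_partition_of n f) j = f j"
  proof (cases "j \<in> {1..n} \<and> f j \<noteq> 0")
    case True
    then have "block n f (f j) \<in> linked_partition_of n f"
      using parent_in_block_heads[OF f] unfolding linked_partition_of_def by auto
    moreover have "j \<in> block n f (f j)" "Min (block n f (f j)) < j"
      using True subexceedant_less[OF f, of j] by (simp_all add: mem_block Min_block[OF f])
    ultimately show ?thesis
      using parent_eq_Min[OF \<pi>] Min_block[OF f] by metis
  next
    case False
    then have "f j = 0"
      using subexceedant_outside[OF f] by auto
    moreover have False if B: "B \<in> linked_partition_of n f" "j \<in> B" "Min B < j" for B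
    proof -
      obtain i where "i \<in> block_heads n f" "B = block n f i"
        using B(1) unfolding linked_partition_of_def by auto
      then show False
        using B False Min_block[OF f] unfolding block_heads_def by (auto simp: mem_block)
    qed
    ultimately show ?thesis
      by (cases rule: parent_cases[OF \<pi>, of j]) auto
  qed
qed

lemma bij_betw_linked_partition_of:
  "bij_betw (linked_partition_of n) (subexceedant n) (linked_partitions n)"
  by (rule bij_betw_byWitness[where f' = parent])
     (auto simp: parent_linked_partition_of linked_partition_of_parent
                 linked_partition_of_in_linked_partitions parent_in_subexceedant)

lemma singly_covered_linked_partition_of_iff:
  assumes f: "f \<in> subexceedant n" and j: "j \<in> {1..n}"
  shows "singly_covered (linked_partition_of n f) j \<longleftrightarrow> f j = 0 \<or> j \<notin> f ` {1..n}"
proof -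
  have "block n f j \<noteq> block n f (f j)"
    using Min_block[OF f] subexceedant_less[OF f j] by (metis less_irrefl)
  then show ?thesis
    unfolding singly_covered_def blocks_containing[OF f j]
    using j unfolding block_heads_def by auto
qed

lemma block_of_linked_partition_of:
  assumes f: "f \<in> subexceedant n" and j: "j \<in> {1..n}"
    and singly: "singly_covered (linked_partition_of n f) j"
  shows "block_of (linked_partition_of n f) j = block n f (if f j = 0 then j else f j)"
proof -
  have "{B \<in> linked_partition_of n f. j \<in> B} = {block n f (if f j = 0 then j else f j)}"
  proof (cases "f j = 0")
    case True
    then have "j \<in> block_heads n f"
      using j unfolding block_heads_def by simp
    then show ?thesis
      unfolding blocks_containing[OF f j] using True by simp
  next
    case False
    then have "j \<notin> block_heads n f"
      using singly_covered_linked_partition_of_iff[OF f j] singly unfolding block_heads_def by simp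
    then show ?thesis
      unfolding blocks_containing[OF f j] using False by simp
  qed
  then show ?thesis
    unfolding block_of_def by (intro the_equality) (auto simp: set_eq_iff)
qed

lemma num_singly_min_linked_partition_of:
  assumes f: "f \<in> subexceedant n"
  shows "num_singly_min n (linked_partition_of n f) = num_zeros n f"
proof -
  have "singly_covered (linked_partition_of n f) j \<and> j = Min (block_of (linked_partition_of n f) j) \<longleftrightarrow> f j = 0"
    if j: "j \<in> {1..n}" for j
    using singly_covered_linked_partition_of_iff[OF f j] block_of_linked_partition_of[OF f j]
      Min_block[OF f] subexceedant_less[OF f j] by auto
  then show ?thesis
    unfolding num_singly_min_def num_zeros_def by (metis (lifting))
qed

lemma beta_linked_partition_of:
  assumes f: "f \<in> subexceedant n"
  shows "beta n (linked_partition_of n f) = card (non_values n f)"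
proof -
  let ?\<pi> = "linked_partition_of n f" and ?unused = "\<lambda>i. i \<notin> f ` {1..n}"
  have "singly_covered ?\<pi> j \<and> j \<noteq> Min (block_of ?\<pi> j) \<longleftrightarrow> f j \<noteq> 0 \<and> ?unused j"
    if j: "j \<in> {1..n}" for j
    using singly_covered_linked_partition_of_iff[OF f j] block_of_linked_partition_of[OF f j]
      Min_block[OF f] subexceedant_less[OF f j] by auto
  then have nonmin: "{j \<in> {1..n}. singly_covered ?\<pi> j \<and> j \<noteq> Min (block_of ?\<pi> j)} =
                     {j \<in> {1..n}. f j \<noteq> 0 \<and> ?unused j}"
    by blast
  have "{B \<in> ?\<pi>. card B = 1} = block n f ` {i \<in> {1..n}. f i = 0 \<and> ?unused i}"
    unfolding linked_partition_of_def block_heads_def using card_block_eq_1_iff[OF f] by auto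
  then have singletons: "card {B \<in> ?\<pi>. card B = 1} = card {i \<in> {1..n}. f i = 0 \<and> ?unused i}"
    by (simp add: card_image inj_on_block[OF f])
  have "non_values n f = {j \<in> {1..n}. f j \<noteq> 0 \<and> ?unused j} \<union> {i \<in> {1..n}. f i = 0 \<and> ?unused i}"
    unfolding non_values_def by auto
  then have "card (non_values n f) =
               card {j \<in> {1..n}. f j \<noteq> 0 \<and> ?unused j} + card {i \<in> {1..n}. f i = 0 \<and> ?unused i}"
    by (simp add: card_Un_disjoint disjoint_iff)
  then show ?thesis
    unfolding beta_def nonmin singletons by simp
qed

lemma card_linked_partitions_stat:
  assumes "\<And>f. f \<in> subexceedant n \<Longrightarrow> stat (linked_partition_of n f) = stat' f"
  shows "card {\<pi> \<in> linked_partitions n. stat \<pi> = k} = card {f \<in> subexceedant n. stat' f = k}"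
  by (rule sym, rule bij_betw_same_card, rule bij_betw_Collect[OF bij_betw_linked_partition_of])
     (simp add: assms)

theorem corollary3p5:
  fixes n :: nat
  assumes "n \<ge> 1"
  shows "card (linked_partitions n) = fact n \<and>
         (\<forall>k. card {\<pi> \<in> linked_partitions n. num_singly_min n \<pi> = k} = stirling_cycles n k) \<and>
         (\<forall>k. card {\<pi> \<in> linked_partitions n. beta n \<pi> = k} = eulerian n k)"
proof (intro conjI allI)
  show "card (linked_partitions n) = fact n"
    using bij_betw_same_card[OF bij_betw_linked_partition_of] card_subexceedant by simp
next
  fix k
  show "card {\<pi> \<in> linked_partitions n. num_singly_min n \<pi> = k} = stirling_cycles n k"
    using card_linked_partitions_stat[where stat = "num_singly_min n", OF num_singly_min_linked_partition_of]
    by (simp add: card_subexceedant_num_zeros_eq_stirling_cycles)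
next
  fix k
  obtain m where "n = Suc m"
    using assms by (cases n) auto
  then show "card {\<pi> \<in> linked_partitions n. beta n \<pi> = k} = eulerian n k"
    using card_linked_partitions_stat[where stat = "beta n", OF beta_linked_partition_of]
    by (simp add: card_subexceedant_non_values_eq_eulerian)
qed

end
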